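(* Suppose $m=0$ (purely deterministic problem). Then for every integer $k\ge1$ and $\tau\in T$: if $\mathfrak{h}(\tau)=k$ then $\rho(\tau)\ge k$; if $\mathfrak{r}(\tau)=k$ then $\rho(\tau)\ge2k-1$; if $\mathfrak{d}(\tau)=k$ then $\rho(\tau)\ge2^k-1$. The same holds for $u\in U_f$ with $\mathfrak{h}',\mathfrak{r}',\mathfrak{d}'$ in place of $\mathfrak{h},\mathfrak{r},\mathfrak{d}$.
   Context: With $m=0$, $T$ is the set of rooted trees (all vertices of the single color $0$): the empty tree $\emptyset$ and all $\tau=[\tau_1,\dots,\tau_\kappa]_0$, $\kappa\ge0$, $\tau_j\in T\setminus\{\emptyset\}$ unordered (new root joined to the roots of the $\tau_j$; $\bullet_0$ if $\kappa=0$). Order: $\rho(\emptyset)=0$, $\rho([\tau_1,\dots,\tau_\kappa]_0)=1+\sum_j\rho(\tau_j)$ (the number of vertices). $U_f$: trees $u=[\tau_1,\dots,\tau_\kappa]_f$, $\kappa\ge0$, $\tau_j\in T\setminus\{\emptyset\}$, $\rho(u)=\sum_j\rho(\tau_j)$, $\mathfrak{g}'(u)=\max_j\mathfrak{g}(\tau_j)$. Maxima over empty sets are $0$. $\mathfrak{h}(\emptyset)=0$, $\mathfrak{h}(\bullet_0)=1$, $\mathfrak{h}([\tau_1,\dots,\tau_\kappa]_0)=1+\max_j\mathfrak{h}(\tau_j)$; $\mathfrak{r}(\emptyset)=0$, $\mathfrak{r}(\bullet_0)=1$, $\mathfrak{r}([\tau_1]_0)=\mathfrak{r}(\tau_1)$,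 $\mathfrak{r}([\tau_1,\dots,\tau_\kappa]_0)=1+\max_j\mathfrak{r}(\tau_j)$ for $\kappa\ge2$; $\mathfrak{d}(\emptyset)=0$, $\mathfrak{d}(\bullet_0)=1$, $\mathfrak{d}([\tau_1,\dots,\tau_\kappa]_0)=M$ if exactly one $i$ has $\mathfrak{d}(\tau_i)=M:=\max_j\mathfrak{d}(\tau_j)$, and $M+1$ if at least two indices attain $M$. *)

theory Defs
  imports Main
begin

text \<open>Nonempty rooted trees with a single vertex colour 0 (m = 0).
  Node ts is the tree [t_1,...,t_k]_0; the children are stored as a list,
  but every quantity below is invariant under permutation of the list,
  so this faithfully represents unordered trees.  The set T is
  rtree option, with None the empty tree.  An element u = [t_1,...,t_k]_f
  of U_f is represented by the list of its (nonempty) subtrees.\<close>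

datatype rtree = Node "rtree list"

definition maxl :: "nat list \<Rightarrow> nat" where
  "maxl xs = foldr max xs 0"

fun rho :: "rtree \<Rightarrow> nat" where
  "rho (Node ts) = 1 + sum_list (map rho ts)"

fun hgt :: "rtree \<Rightarrow> nat" where
  "hgt (Node ts) = 1 + maxl (map hgt ts)"

fun rfun :: "rtree \<Rightarrow> nat" where
  "rfun (Node []) = 1"
| "rfun (Node [t]) = rfun t"
| "rfun (Node (t1 # t2 # ts)) = 1 + maxl (map rfun (t1 # t2 # ts))"

fun dfun :: "rtree \<Rightarrow> nat" where
  "dfun (Node []) = 1"
| "dfun (Node (t # ts)) =
     (let ds = map dfun (t # ts); M = maxl ds in
      if length (filter (\<lambda>x. x = M) ds) \<ge> 2 then M + 1 else M)"

fun rhoT :: "rtree option \<Rightarrow> nat" where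
  "rhoT None = 0" | "rhoT (Some t) = rho t"
fun hT :: "rtree option \<Rightarrow> nat" where
  "hT None = 0" | "hT (Some t) = hgt t"
fun rT :: "rtree option \<Rightarrow> nat" where
  "rT None = 0" | "rT (Some t) = rfun t"
fun dT :: "rtree option \<Rightarrow> nat" where
  "dT None = 0" | "dT (Some t) = dfun t"

definition rhoU :: "rtree list \<Rightarrow> nat" where
  "rhoU us = sum_list (map rho us)"
definition hU :: "rtree list \<Rightarrow> nat" where
  "hU us = maxl (map hgt us)"
definition rU :: "rtree list \<Rightarrow> nat" where
  "rU us = maxl (map rfun us)"
definition dU :: "rtree list \<Rightarrow> nat" where
  "dU us = maxl (map dfun us)"

end

theory Submission
  imports Defs
begin

text \<open>The height grows by one
  per vertex on a longest root path. The quantity \<open>rfun\<close> only grows at a vertex with at least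
  two children, and the second child contributes at least one further vertex, giving the step
  \<open>2k - 1 \<mapsto> 2k + 1\<close>. The quantity \<open>dfun\<close> only grows at a vertex where two children attain the
  maximum \<open>M\<close>, each of which has at least \<open>2^M - 1\<close> vertices, giving \<open>2^(M+1) - 1\<close>.
  On \<open>U_f\<close> the value \<open>k \<ge> 1\<close> is attained by one of the trees, which is bounded by the forest.\<close>

lemma maxl_Nil [simp]: "maxl [] = 0"
  by (simp add: maxl_def)

lemma maxl_Cons [simp]: "maxl (x # xs) = max x (maxl xs)"
  by (simp add: maxl_def)

lemma maxl_map_attained:
  assumes "xs \<noteq> []"
  shows "\<exists>x\<in>set xs. f x = maxl (map f xs)"
  using assms
proof (induction xs)
  case Nil
  then show ?case by simp
next
  case (Cons a xs)
  then show ?case by (cases "xs = []") (auto simp: max_def)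
qed

lemma member_le_sum_list_map:
  fixes f :: "'a \<Rightarrow> nat"
  shows "x \<in> set xs \<Longrightarrow> f x \<le> sum_list (map f xs)"
  by (induction xs) auto

lemma sum_list_map_two_filtered:
  fixes f :: "'a \<Rightarrow> nat"
  assumes "length (filter P xs) \<ge> 2"
  obtains a b where "a \<in> set xs" "b \<in> set xs" "P a" "P b"
    "f a + f b \<le> sum_list (map f xs)"
proof -
  obtain a b r where ab: "filter P xs = a # b # r"
    using assms by (cases "filter P xs"; cases "tl (filter P xs)") auto
  then have "a \<in> set (filter P xs)" "b \<in> set (filter P xs)" by simp_all
  moreover have "f a + f b \<le> sum_list (map f (filter P xs))" using ab by simp
  ultimately show thesis
    using that sum_list_filter_le_nat[of f P xs] by force
qed

lemma rho_pos: "rho t \<ge> 1"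
  by (cases t) simp

lemma rho_member_less_sum:
  assumes "x \<in> set ts" and "length ts \<ge> 2"
  shows "rho x < sum_list (map rho ts)"
proof -
  have "length (remove1 x ts) \<ge> 1"
    using assms by (simp add: length_remove1)
  then obtain y where "y \<in> set (remove1 x ts)" by (cases "remove1 x ts") auto
  then have "1 \<le> sum_list (map rho (remove1 x ts))"
    using rho_pos[of y] member_le_sum_list_map[of y "remove1 x ts" rho] by linarith
  then show ?thesis
    using assms(1) by (simp add: sum_list_map_remove1)
qed

lemma hgt_le_rho: "hgt t \<le> rho t"
proof (induction t)
  case (Node ts)
  show ?case
  proof (cases "ts = []")
    case True
    then show ?thesis by simp
  next
    case False
    then obtain x where x: "x \<in> set ts" "hgt x = maxl (map hgt ts)"
      using maxl_map_attained by metis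
    have "hgt x \<le> rho x" using Node.IH[OF x(1)] .
    also have "\<dots> \<le> sum_list (map rho ts)" using x(1) by (rule member_le_sum_list_map)
    finally show ?thesis using x(2) by simp
  qed
qed

lemma rfun_le_rho: "2 * rfun t - 1 \<le> rho t"
proof (induction t rule: rfun.induct)
  case 1
  then show ?case by simp
next
  case (2 t)
  then show ?case by simp
next
  case (3 t1 t2 ts)
  let ?ts = "t1 # t2 # ts"
  obtain x where x: "x \<in> set ?ts" "rfun x = maxl (map rfun ?ts)"
    using maxl_map_attained[of ?ts rfun] by auto
  have "2 * rfun x - 1 \<le> rho x" using 3 x(1) by blast
  moreover have "rho x < sum_list (map rho ?ts)" using rho_member_less_sum[OF x(1)] by simp
  ultimately have "2 * rfun x + 1 \<le> 1 + sum_list (map rho ?ts)" by linarith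
  then show ?case using x(2) by simp
qed

lemma dfun_Node_Cons:
  "dfun (Node (t # ts)) =
     (let M = maxl (map dfun (t # ts))
      in if length (filter (\<lambda>s. dfun s = M) (t # ts)) \<ge> 2 then M + 1 else M)"
  by (simp add: Let_def filter_map comp_def)

lemma dfun_le_rho: "2 ^ dfun t - 1 \<le> rho t"
proof (induction t rule: dfun.induct)
  case 1
  then show ?case by simp
next
  case (2 t ts)
  let ?ts = "t # ts"
  define M where "M = maxl (map dfun ?ts)"
  have IH: "2 ^ dfun s - 1 \<le> rho s" if "s \<in> set ?ts" for s using 2 that by auto
  show ?case
  proof (cases "length (filter (\<lambda>s. dfun s = M) ?ts) \<ge> 2")
    case True
    then obtain a b where "a \<in> set ?ts" "b \<in> set ?ts" "dfun a = M" "dfun b = M"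
      and ab: "rho a + rho b \<le> sum_list (map rho ?ts)"
      by (rule sum_list_map_two_filtered)
    then have "2 ^ M - 1 \<le> rho a" "2 ^ M - 1 \<le> rho b" using IH by metis+
    moreover have "(2::nat) ^ M \<ge> 1" by simp
    ultimately have "2 ^ (M + 1) - 1 \<le> 1 + sum_list (map rho ?ts)" using ab by simp
    then show ?thesis using True by (simp only: dfun_Node_Cons Let_def M_def [symmetric]) simp
  next
    case False
    obtain x where x: "x \<in> set ?ts" "dfun x = M"
      using maxl_map_attained[of ?ts dfun] M_def by auto
    have "2 ^ M - 1 \<le> rho x" using IH x by auto
    also have "\<dots> \<le> sum_list (map rho ?ts)" using x(1) by (rule member_le_sum_list_map)
    finally have "2 ^ M - 1 \<le> sum_list (map rho ?ts)" .
    then show ?thesis using False by (simp only: dfun_Node_Cons Let_def M_def [symmetric]) simp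
  qed
qed

text \<open>The hypothesis \<open>k \<ge> 1\<close> excludes the empty forest, whose maximum is \<open>0\<close>.\<close>

lemma forest_bound:
  assumes tree_bound: "\<And>t. g (f t) \<le> rho t"
    and "maxl (map f us) = k" and "k \<ge> 1"
  shows "g k \<le> rhoU us"
proof -
  have "us \<noteq> []" using assms(2,3) by auto
  then obtain x where x: "x \<in> set us" "f x = k"
    using maxl_map_attained assms(2) by metis
  have "g k \<le> rho x" using tree_bound x(2) by metis
  also have "\<dots> \<le> rhoU us" unfolding rhoU_def using x(1) by (rule member_le_sum_list_map)
  finally show ?thesis .
qed

theorem mainTheorem11:
  fixes k :: nat and \<tau> :: "rtree option" and u :: "rtree list"
  assumes "k \<ge> 1"
  shows "(hT \<tau> = k \<longrightarrow> rhoT \<tau> \<ge> k) \<and>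
         (rT \<tau> = k \<longrightarrow> rhoT \<tau> \<ge> 2 * k - 1) \<and>
         (dT \<tau> = k \<longrightarrow> rhoT \<tau> \<ge> 2 ^ k - 1) \<and>
         (hU u = k \<longrightarrow> rhoU u \<ge> k) \<and>
         (rU u = k \<longrightarrow> rhoU u \<ge> 2 * k - 1) \<and>
         (dU u = k \<longrightarrow> rhoU u \<ge> 2 ^ k - 1)"
proof -
  have "(hT \<tau> = k \<longrightarrow> rhoT \<tau> \<ge> k) \<and>
        (rT \<tau> = k \<longrightarrow> rhoT \<tau> \<ge> 2 * k - 1) \<and>
        (dT \<tau> = k \<longrightarrow> rhoT \<tau> \<ge> 2 ^ k - 1)"
    using hgt_le_rho rfun_le_rho dfun_le_rho by (cases \<tau>) auto
  moreover have "hU u = k \<longrightarrow> rhoU u \<ge> k"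
    using forest_bound[where g = "\<lambda>x. x" and f = hgt and us = u and k = k] hgt_le_rho assms
    by (simp add: hU_def)
  moreover have "rU u = k \<longrightarrow> rhoU u \<ge> 2 * k - 1"
    using forest_bound[where g = "\<lambda>x. 2 * x - 1" and f = rfun and us = u and k = k] rfun_le_rho assms
    by (simp add: rU_def)
  moreover have "dU u = k \<longrightarrow> rhoU u \<ge> 2 ^ k - 1"
    using forest_bound[where g = "\<lambda>x. 2 ^ x - 1" and f = dfun and us = u and k = k] dfun_le_rho assms
    by (simp add: dU_def)
  ultimately show ?thesis by blast
qed

end
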